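(* Let $U$ be an $r$-dimensional subspace of $\mathbb{R}^d$, $0\ne v\in U^\perp$, $\delta\in(0,1)$, and let $\Omega$ be a list of $m$ indices sampled independently and uniformly with replacement from $[d]$, where $m\ge 4\mu(v)\log(1/\delta)$. Let $\beta=(1+2\log(1/\delta))^2$. Then with probability at least $1-\delta$, $$\|U_\Omega^Tv_\Omega\|_2^2\le\beta\,\frac md\,\frac{r\mu(U)}{d}\,\|v\|_2^2.$$
   Context: For an $r$-dimensional subspace $U\subseteq\mathbb{R}^d$, $\mu(U)=\frac{d}{r}\max_{i\in[d]}\|\mathcal{P}_Ue_i\|_2^2$; for a nonzero $v\in\mathbb{R}^d$, $\mu(v)=d\|v\|_\infty^2/\|v\|_2^2$. For a list $\Omega\in[d]^m$, $v_\Omega\in\mathbb{R}^m$ has $j$th entry $v(\Omega(j))$. Taking $U$ also to denote a $d\times r$ matrix with orthonormal columns spanning $U$, $U_\Omega$ is the $m\times r$ matrix whose $j$th row is row $\Omega(j)$ of $U$. *)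

theory Defs
  imports "HOL-Analysis.Analysis" "HOL-Probability.Probability"
begin

text \<open>A d x r matrix U with orthonormal columns represents the subspace it spans.
  Dimensions are the cardinalities of the finite index types 'd and 'r.\<close>

definition orthonormal_cols :: "real^'r^'d \<Rightarrow> bool" where
  "orthonormal_cols U \<longleftrightarrow> transpose U ** U = mat 1"

definition proj_sub :: "real^'r^'d \<Rightarrow> real^'d \<Rightarrow> real^'d" where
  "proj_sub U x = (U ** transpose U) *v x"

definition coh_sub :: "real^'r^'d \<Rightarrow> real" where
  "coh_sub U = real CARD('d) / real CARD('r) *
     Max (range (\<lambda>i::'d. (norm (proj_sub U (axis i 1)))\<^sup>2))"

definition coh_vec :: "real^'d \<Rightarrow> real" where
  "coh_vec v = real CARD('d) * (infnorm v)\<^sup>2 / (norm v)\<^sup>2"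

text \<open>U_Omega^T v_Omega = sum_j v(Omega j) * (row Omega(j) of U).\<close>
definition sampled_prod :: "real^'r^'d \<Rightarrow> real^'d \<Rightarrow> 'd list \<Rightarrow> real^'r" where
  "sampled_prod U v \<Omega> = (\<Sum>j<length \<Omega>. (v $ (\<Omega> ! j)) *\<^sub>R (U $ (\<Omega> ! j)))"

text \<open>m indices drawn independently and uniformly with replacement from [d].\<close>
definition sample_lists :: "nat \<Rightarrow> 'd::finite list pmf" where
  "sample_lists m = pmf_of_set {xs. length xs = m}"

end

theory Submission imports Defs begin

(* Write S(\<Omega>) = U_\<Omega>^T v_\<Omega> as the sum, over the sampled indices, of the
   vectors w a = v(a) * (row a of U).  Since v \<perp> U these vectors sum to zero over [d], so
   each summand has mean zero and S is a sum of m independent, centred random vectors in R^r. *)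

subsection \<open>Scalar estimates\<close>

lemma powers_le_square:
  fixes h :: real
  assumes "\<bar>h\<bar> \<le> 1"
  shows "h^4 \<le> h^2" "h^3 \<le> h^2"
proof -
  have "h^2 \<le> 1" using assms by (simp add: abs_square_le_1)
  then have "h^2 * h^2 \<le> h^2 * 1" by (intro mult_left_mono) simp_all
  then show "h^4 \<le> h^2" by (simp add: power_numeral_reduce)
  have "h * h^2 \<le> \<bar>h\<bar> * h^2" by (rule mult_right_mono) auto
  also have "\<dots> \<le> 1 * h^2" by (rule mult_right_mono[OF assms]) simp
  finally show "h^3 \<le> h^2" by (simp add: power_numeral_reduce)
qed

text \<open>Third-order Taylor expansion of exp on [-1,1]; the Lagrange remainder
  exp t h^4 / 24 is at most 3 h^2 / 24 because exp 1 < 3.\<close>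
lemma exp_taylor3:
  fixes h :: real
  assumes "\<bar>h\<bar> \<le> 1"
  shows "\<exists>c. 0 \<le> c \<and> c \<le> 3 * h^2 \<and> exp h = 1 + h + h^2/2 + h^3/6 + c/24"
proof -
  obtain t where t: "\<bar>t\<bar> \<le> \<bar>h\<bar>"
    "exp h = (\<Sum>m<4. h ^ m / fact m) + exp t / fact 4 * h ^ 4"
    using Maclaurin_exp_le[of h 4] by blast
  have "exp t \<le> exp 1" using t assms by simp
  also have "\<dots> \<le> 3" by (rule exp_le)
  finally have "exp t * h^4 \<le> 3 * h^4" by (intro mult_right_mono) simp_all
  then have "exp t * h^4 \<le> 3 * h^2" using powers_le_square[OF assms] by linarith
  moreover have "(\<Sum>m<4. h ^ m / fact m) = 1 + h + h^2/2 + h^3/6"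
    by (simp add: eval_nat_numeral fact_numeral)
  moreover have "fact 4 = (24::real)" by (simp add: eval_nat_numeral fact_numeral)
  ultimately show ?thesis using t by (intro exI[of _ "exp t * h^4"]) auto
qed

lemma cosh_le_quadratic:
  fixes h :: real
  assumes "\<bar>h\<bar> \<le> 1"
  shows "cosh h \<le> 1 + 5/8 * h^2"
proof -
  obtain c1 where c1: "0 \<le> c1" "c1 \<le> 3 * h^2" "exp h = 1 + h + h^2/2 + h^3/6 + c1/24"
    using exp_taylor3[OF assms] by blast
  obtain c2 where c2: "0 \<le> c2" "c2 \<le> 3 * h^2" "exp (-h) = 1 - h + h^2/2 - h^3/6 + c2/24"
    using exp_taylor3[of "-h"] assms by auto
  have "cosh h = 1 + h^2/2 + c1/48 + c2/48"
    using c1 c2 by (simp add: cosh_field_def field_simps)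
  then show ?thesis using c1(2) c2(2) by linarith
qed

lemma sinh_le_quadratic:
  fixes h :: real
  assumes "\<bar>h\<bar> \<le> 1"
  shows "sinh h \<le> h + 1/4 * h^2"
proof -
  obtain c1 where c1: "0 \<le> c1" "c1 \<le> 3 * h^2" "exp h = 1 + h + h^2/2 + h^3/6 + c1/24"
    using exp_taylor3[OF assms] by blast
  obtain c2 where c2: "0 \<le> c2" "c2 \<le> 3 * h^2" "exp (-h) = 1 - h + h^2/2 - h^3/6 + c2/24"
    using exp_taylor3[of "-h"] assms by auto
  have "sinh h = h + h^3/6 + c1/48 - c2/48"
    using c1 c2 by (simp add: sinh_field_def field_simps)
  moreover have "0 \<le> h^2" by simp
  ultimately show ?thesis using c1(2) c2(1) powers_le_square(2)[OF assms] by linarith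
qed

text \<open>sinh a / a \<le> cosh a for a \<ge> 0: the derivative of sinh x - x cosh x is -x sinh x \<le> 0.\<close>
lemma sinh_le_mult_cosh:
  fixes a :: real
  assumes "0 \<le> a"
  shows "sinh a \<le> a * cosh a"
proof -
  have "(\<lambda>x. sinh x - x * cosh x) a \<le> (\<lambda>x. sinh x - x * cosh x) 0"
  proof (rule DERIV_nonpos_imp_nonincreasing[OF assms])
    fix x :: real assume "0 \<le> x"
    show "\<exists>y. ((\<lambda>x. sinh x - x * cosh x) has_real_derivative y) (at x) \<and> y \<le> 0"
      by (rule exI[of _ "cosh x - (cosh x + x * sinh x)"])
         (auto intro!: derivative_eq_intros simp: \<open>0 \<le> x\<close>)
  qed
  then show ?thesis by simp
qed

text \<open>Second-order control of cosh around a \<ge> 0: if \<rho> is within b \<le> 1 of a and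
  a (\<rho> - a) \<le> p + b^2/2, then cosh \<rho> exceeds cosh a by at most a linear term in p
  plus a quadratic term in b.  (Note that sinh 0 / 0 = 0.)\<close>
lemma cosh_perturbation:
  fixes a \<rho> b p :: real
  assumes a: "0 \<le> a" and close: "\<bar>\<rho> - a\<bar> \<le> b" "b \<le> 1"
    and drift: "2 * a * (\<rho> - a) \<le> 2 * p + b^2"
  shows "cosh \<rho> \<le> cosh a + sinh a / a * p + 11/8 * b^2 * cosh a"
proof -
  define h where "h = \<rho> - a"
  have h1: "\<bar>h\<bar> \<le> 1" using close h_def by simp
  have hb: "h^2 \<le> b^2" using close h_def by (metis abs_ge_zero power2_abs power_mono)
  have sa: "0 \<le> sinh a" using a by simp
  have quad: "cosh a * h^2 \<le> cosh a * b^2" "sinh a * h^2 \<le> cosh a * b^2"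
    using hb by (auto intro!: mult_mono sinh_le_cosh_real)
  have lin: "sinh a * h \<le> sinh a / a * p + 1/2 * (cosh a * b^2)"
  proof (cases "a = 0")
    case False
    then have apos: "0 < a" using a by simp
    have "sinh a * h = sinh a / a * (a * h)" using apos by simp
    also have "\<dots> \<le> sinh a / a * (p + b^2/2)"
      by (rule mult_left_mono) (use drift h_def apos sa in auto)
    also have "\<dots> \<le> sinh a / a * p + cosh a * b^2 / 2"
    proof -
      have "sinh a / a \<le> cosh a"
        using sinh_le_mult_cosh[OF a] apos by (simp add: divide_le_eq mult.commute)
      then have "sinh a / a * b^2 / 2 \<le> cosh a * b^2 / 2"
        by (intro divide_right_mono mult_right_mono) auto
      then show ?thesis by (simp add: algebra_simps)
    qed
    finally show ?thesis by simp
  qed simp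
  have "cosh \<rho> = cosh a * cosh h + sinh a * sinh h"
    unfolding h_def by (simp add: cosh_add[symmetric])
  also have "\<dots> \<le> cosh a * (1 + 5/8 * h^2) + sinh a * (h + 1/4 * h^2)"
    by (intro add_mono mult_left_mono cosh_le_quadratic sinh_le_quadratic h1) (use sa in auto)
  also have "\<dots> = cosh a + 5/8 * (cosh a * h^2) + sinh a * h + 1/4 * (sinh a * h^2)"
    by (simp add: algebra_simps)
  also have "\<dots> \<le> cosh a + sinh a / a * p + 11/8 * (cosh a * b^2)"
    using quad lin by linarith
  also have "\<dots> = cosh a + sinh a / a * p + 11/8 * b^2 * cosh a"
    by (simp add: algebra_simps)
  finally show ?thesis .
qed

lemma cosh_norm_add:
  fixes s x :: "'a::real_inner"
  assumes "norm x \<le> 1"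
  shows "cosh (norm (s + x)) \<le>
    cosh (norm s) + sinh (norm s) / norm s * (s \<bullet> x) + 11/8 * (norm x)^2 * cosh (norm s)"
proof (rule cosh_perturbation)
  show "\<bar>norm (s + x) - norm s\<bar> \<le> norm x"
    by (metis add_diff_cancel_left' norm_triangle_ineq3)
  have sq: "(norm (s + x))^2 = (norm s)^2 + 2 * (s \<bullet> x) + (norm x)^2"
    by (simp add: power2_norm_eq_inner inner_add inner_commute)
  have "2 * norm s * (norm (s + x) - norm s)
      = (norm (s + x))^2 - (norm s)^2 - (norm (s + x) - norm s)^2"
    by algebra
  then show "2 * norm s * (norm (s + x) - norm s) \<le> 2 * (s \<bullet> x) + (norm x)^2"
    using sq by (smt (verit) zero_le_power2)
qed (use assms in simp_all)

lemma exp_le_square_poly: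
  fixes L :: real
  assumes "0 \<le> L" "L \<le> 4"
  shows "exp L \<le> (1 + 2 * L)^2"
proof -
  define y where "y = L / 4"
  have y: "0 \<le> y" "y \<le> 1" using assms y_def by auto
  have p: "y^2 \<le> y" "y^3 \<le> y" "y^4 \<le> y" using y
    by (simp_all add: power_le_one mult_left_le_one_le power2_eq_square
        power3_eq_cube eval_nat_numeral mult_le_one mult_left_le)
  have "exp L = (exp y)^4" unfolding y_def by (simp add: exp_of_nat_mult[symmetric])
  also have "\<dots> \<le> ((1 + y + y^2)^2)^2"
    using power_mono[OF exp_bound[OF y], of 4] by (simp add: power_mult[symmetric])
  also have "\<dots> \<le> (1 + 8 * y)^2"
  proof (rule power_mono)
    have "(1 + y + y^2)^2 = 1 + 2*y + 3*y^2 + 2*y^3 + y^4" by algebra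
    then show "(1 + y + y^2)^2 \<le> 1 + 8 * y" using p by linarith
  qed simp
  also have "1 + 8 * y = 1 + 2 * L" using y_def by simp
  finally show ?thesis .
qed

lemma exp_tail_large_L:
  fixes L :: real
  assumes "4 \<le> L"
  shows "2 * exp (11/2 * L - 2 * sqrt L * (1 + 2 * L)) \<le> exp (-L)"
proof -
  define s where "s = sqrt L"
  have s: "2 \<le> s" using assms s_def real_sqrt_le_mono[of 4 L] by simp
  have L: "L = s^2" using s_def assms by simp
  have "2 * s^2 \<le> s * s^2" using s by (intro mult_right_mono) auto
  then have cube: "8 * s^2 \<le> 4 * s^3" by (simp add: power3_eq_cube power2_eq_square)
  have expo: "1 + 11/2 * L - 2 * s * (1 + 2 * L) \<le> -L"
  proof -
    have "2 * s * (1 + 2 * L) = 2 * s + 4 * s^3" unfolding L by algebra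
    moreover have "0 \<le> s^2" by simp
    ultimately show ?thesis using cube s unfolding L by linarith
  qed
  have "2 * exp (11/2 * L - 2 * s * (1 + 2 * L)) \<le> exp 1 * exp (11/2 * L - 2 * s * (1 + 2 * L))"
    using exp_ge_add_one_self[of 1] by (intro mult_right_mono) auto
  also have "\<dots> = exp (1 + 11/2 * L - 2 * s * (1 + 2 * L))" by (simp add: exp_add[symmetric])
  also have "\<dots> \<le> exp (-L)" using expo by simp
  finally show ?thesis unfolding s_def .
qed

subsection \<open>Sums over uniformly sampled index lists\<close>

text \<open>Summing over all lists of length m+1 splits into the first entry and the rest; this
  is the independence of the samples, expressed as counting.\<close>
lemma sum_lists_Suc:
  "(\<Sum>xs\<in>{xs::'a::finite list. length xs = Suc m}. f xs)
     = (\<Sum>x\<in>UNIV. \<Sum>xs\<in>{xs. length xs = m}. f (x # xs))"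
proof -
  have split: "{xs::'a list. length xs = Suc m} = (\<lambda>(x, xs). x # xs) ` (UNIV \<times> {xs. length xs = m})"
    by (auto simp: length_Suc_conv image_iff)
  have inj: "inj_on (\<lambda>(x, xs). x # xs) (UNIV \<times> {xs::'a list. length xs = m})"
    by (auto simp: inj_on_def)
  show ?thesis
    unfolding split sum.reindex[OF inj] by (subst sum.cartesian_product) (simp add: case_prod_beta)
qed

lemma card_lists_UNIV: "card {xs::'a::finite list. length xs = m} = CARD('a) ^ m"
  using card_lists_length_eq[of "UNIV::'a set" m] by simp

lemma finite_lists_UNIV: "finite {xs::'a::finite list. length xs = m}"
  using finite_lists_length_eq[of "UNIV::'a set" m] by simp

lemma second_moment_lists:
  fixes w :: "'d::finite \<Rightarrow> 'v::real_inner"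
  assumes centred: "(\<Sum>a\<in>UNIV. w a) = 0"
  shows "(\<Sum>xs\<in>{xs. length xs = m}. (norm (sum_list (map w xs)))^2)
     = real CARD('d) ^ m * (real m / real CARD('d) * (\<Sum>a\<in>UNIV. (norm (w a))^2))"
proof (induction m)
  case (Suc m)
  let ?A = "{xs::'d list. length xs = m}" and ?S = "\<lambda>xs. sum_list (map w xs)"
  let ?W = "\<Sum>a\<in>UNIV. (norm (w a))^2" and ?D = "real CARD('d)"
  have cross: "(\<Sum>x\<in>UNIV. w x \<bullet> ?S xs) = 0" for xs
    by (simp add: inner_sum_left[symmetric] centred)
  have "(\<Sum>xs\<in>{xs. length xs = Suc m}. (norm (?S xs))^2)
      = (\<Sum>x\<in>UNIV. \<Sum>xs\<in>?A. (norm (w x))^2 + 2 * (w x \<bullet> ?S xs) + (norm (?S xs))^2)"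
    by (simp add: sum_lists_Suc power2_norm_eq_inner inner_add inner_commute algebra_simps)
  also have "\<dots> = ?D ^ m * ?W + 2 * (\<Sum>xs\<in>?A. \<Sum>x\<in>UNIV. w x \<bullet> ?S xs)
      + ?D * (\<Sum>xs\<in>?A. (norm (?S xs))^2)"
    by (simp add: sum.distrib sum_distrib_left sum.swap[of _ "UNIV::'d set"] card_lists_UNIV)
  also have "\<dots> = ?D ^ Suc m * (real (Suc m) / ?D * ?W)"
    unfolding Suc.IH cross by (simp add: field_simps)
  finally show ?case .
qed simp

lemma cosh_moment_lists:
  fixes w :: "'d::finite \<Rightarrow> 'v::real_inner"
  assumes centred: "(\<Sum>a\<in>UNIV. w a) = 0" and small: "\<And>a. norm (w a) \<le> 1"
  shows "(\<Sum>xs\<in>{xs. length xs = m}. cosh (norm (sum_list (map w xs))))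
     \<le> (real CARD('d) + 11/8 * (\<Sum>a\<in>UNIV. (norm (w a))^2)) ^ m"
proof (induction m)
  case (Suc m)
  let ?A = "{xs::'d list. length xs = m}" and ?S = "\<lambda>xs. sum_list (map w xs)"
  let ?q = "real CARD('d) + 11/8 * (\<Sum>a\<in>UNIV. (norm (w a))^2)"
  have step: "(\<Sum>x\<in>UNIV. cosh (norm (?S xs + w x))) \<le> ?q * cosh (norm (?S xs))" for xs
  proof -
    let ?c = "cosh (norm (?S xs))" and ?g = "sinh (norm (?S xs)) / norm (?S xs)"
    have "(\<Sum>x\<in>UNIV. cosh (norm (?S xs + w x)))
        \<le> (\<Sum>x\<in>UNIV. ?c + ?g * (?S xs \<bullet> w x) + 11/8 * (norm (w x))^2 * ?c)"
      by (intro sum_mono cosh_norm_add small)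
    also have "\<dots> = real CARD('d) * ?c + ?g * (?S xs \<bullet> (\<Sum>x\<in>UNIV. w x))
        + 11/8 * (\<Sum>x\<in>UNIV. (norm (w x))^2) * ?c"
      by (simp add: sum.distrib sum_distrib_left sum_distrib_right inner_sum_right mult.assoc)
    also have "\<dots> = ?q * ?c" by (simp add: centred algebra_simps)
    finally show ?thesis .
  qed
  have "(\<Sum>xs\<in>{xs. length xs = Suc m}. cosh (norm (?S xs)))
      = (\<Sum>xs\<in>?A. \<Sum>x\<in>UNIV. cosh (norm (?S xs + w x)))"
    by (simp add: sum_lists_Suc sum.swap[of _ "UNIV::'d set"] add.commute)
  also have "\<dots> \<le> (\<Sum>xs\<in>?A. ?q * cosh (norm (?S xs)))" by (intro sum_mono step)
  also have "\<dots> \<le> ?q * ?q ^ m"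
    unfolding sum_distrib_left[symmetric]
    by (rule mult_left_mono[OF Suc.IH]) (simp add: add_nonneg_nonneg sum_nonneg)
  finally show ?case by simp
qed simp

lemma card_mult_le_sum:
  fixes f :: "'a \<Rightarrow> real"
  assumes "finite A" "B \<subseteq> A" "\<And>x. x \<in> B \<Longrightarrow> t \<le> f x" "\<And>x. x \<in> A \<Longrightarrow> 0 \<le> f x"
  shows "real (card B) * t \<le> (\<Sum>x\<in>A. f x)"
proof -
  have "real (card B) * t \<le> (\<Sum>x\<in>B. f x)" using sum_bounded_below[of B t f] assms(3) by simp
  also have "\<dots> \<le> (\<Sum>x\<in>A. f x)" using assms by (intro sum_mono2) auto
  finally show ?thesis .
qed

lemma sum_list_map_scaleR:
  fixes w :: "'a \<Rightarrow> 'v::real_vector"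
  shows "sum_list (map (\<lambda>x. c *\<^sub>R w x) xs) = c *\<^sub>R sum_list (map w xs)"
  by (induction xs) (simp_all add: scaleR_add_right)

subsection \<open>Tail bounds\<close>

lemma second_moment_tail:
  fixes w :: "'d::finite \<Rightarrow> 'v::real_inner"
  assumes "(\<Sum>a\<in>UNIV. w a) = 0"
  shows "real (card {xs. length xs = m \<and> t < (norm (sum_list (map w xs)))^2}) * t
    \<le> real CARD('d) ^ m * (real m / real CARD('d) * (\<Sum>a\<in>UNIV. (norm (w a))^2))"
  unfolding second_moment_lists[OF assms, symmetric]
  by (rule card_mult_le_sum[OF finite_lists_UNIV]) (blast, simp_all)

lemma cosh_moment_tail:
  fixes w :: "'d::finite \<Rightarrow> 'v::real_inner"
  assumes centred: "(\<Sum>a\<in>UNIV. w a) = 0"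
    and \<kappa>: "0 < \<kappa>" "\<And>a. \<kappa> * norm (w a) \<le> 1" and t: "0 \<le> t"
  shows "real (card {xs. length xs = m \<and> t < norm (sum_list (map w xs))}) * (exp (\<kappa> * t) / 2)
    \<le> real CARD('d) ^ m * exp (11/8 * \<kappa>^2 * (real m / real CARD('d) * (\<Sum>a\<in>UNIV. (norm (w a))^2)))"
proof -
  let ?D = "real CARD('d)" and ?W = "\<Sum>a\<in>UNIV. (norm (w a))^2"
  let ?S = "\<lambda>xs. sum_list (map w xs)"
  have "(\<Sum>a\<in>UNIV. \<kappa> *\<^sub>R w a) = 0" by (simp add: scaleR_sum_right[symmetric] centred)
  moreover have "norm (\<kappa> *\<^sub>R w a) \<le> 1" for a using \<kappa> by simp
  ultimately have "(\<Sum>xs\<in>{xs. length xs = m}. cosh (\<kappa> * norm (?S xs)))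
      \<le> (?D + 11/8 * (\<kappa>^2 * ?W)) ^ m"
    using cosh_moment_lists[of "\<lambda>a. \<kappa> *\<^sub>R w a" m] \<kappa>
    by (simp add: sum_list_map_scaleR power_mult_distrib sum_distrib_left)
  also have "\<dots> \<le> (?D * exp (11/8 * \<kappa>^2 * ?W / ?D)) ^ m"
  proof (rule power_mono)
    have "?D + 11/8 * (\<kappa>^2 * ?W) = ?D * (1 + 11/8 * \<kappa>^2 * ?W / ?D)" by (simp add: field_simps)
    also have "\<dots> \<le> ?D * exp (11/8 * \<kappa>^2 * ?W / ?D)"
      by (intro mult_left_mono exp_ge_add_one_self) simp
    finally show "?D + 11/8 * (\<kappa>^2 * ?W) \<le> ?D * exp (11/8 * \<kappa>^2 * ?W / ?D)" .
  qed (simp add: sum_nonneg)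
  also have "\<dots> = ?D ^ m * exp (11/8 * \<kappa>^2 * (real m / ?D * ?W))"
    by (simp add: power_mult_distrib exp_of_nat_mult[symmetric] field_simps)
  finally have moment: "(\<Sum>xs\<in>{xs. length xs = m}. cosh (\<kappa> * norm (?S xs)))
      \<le> ?D ^ m * exp (11/8 * \<kappa>^2 * (real m / ?D * ?W))" .
  have tail: "exp (\<kappa> * t) / 2 \<le> cosh (\<kappa> * norm (?S xs))" if "t < norm (?S xs)" for xs
  proof -
    have "exp (\<kappa> * t) / 2 \<le> cosh (\<kappa> * t)" by (simp add: cosh_field_def)
    also have "\<dots> \<le> cosh (\<kappa> * norm (?S xs))"
      using that \<kappa> t by (simp add: cosh_real_nonneg_le_iff)
    finally show ?thesis .
  qed
  have "real (card {xs. length xs = m \<and> t < norm (?S xs)}) * (exp (\<kappa> * t) / 2)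
      \<le> (\<Sum>xs\<in>{xs. length xs = m}. cosh (\<kappa> * norm (?S xs)))"
    by (rule card_mult_le_sum[OF finite_lists_UNIV]) (blast, use tail in simp_all)
  then show ?thesis using moment by (rule order.trans)
qed

text \<open>The tail for moderate L (0 < L \<le> 4): Chebyshev's inequality suffices, because
  (1 + 2L)^2 \<ge> exp L on this range.\<close>
lemma norm_sum_lists_tail_moderate:
  fixes w :: "'d::finite \<Rightarrow> 'v::real_inner"
  assumes centred: "(\<Sum>a\<in>UNIV. w a) = 0" and L: "0 < L" "L \<le> 4" and \<sigma>: "0 < \<sigma>2"
    and variance: "real m / real CARD('d) * (\<Sum>a\<in>UNIV. (norm (w a))^2) \<le> \<sigma>2"
  shows "real (card {xs. length xs = m \<and> (1 + 2 * L)^2 * \<sigma>2 < (norm (sum_list (map w xs)))^2})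
    \<le> exp (-L) * real CARD('d) ^ m" (is "real (card ?B) \<le> _")
proof -
  let ?D = "real CARD('d)"
  have "real (card ?B) * ((1 + 2 * L)^2 * \<sigma>2)
      \<le> ?D ^ m * (real m / ?D * (\<Sum>a\<in>UNIV. (norm (w a))^2))"
    by (rule second_moment_tail[OF centred])
  also have "\<dots> \<le> ?D ^ m * \<sigma>2" by (rule mult_left_mono[OF variance]) simp
  finally have "real (card ?B) * (1 + 2 * L)^2 * \<sigma>2 \<le> ?D ^ m * \<sigma>2"
    by (simp only: mult.assoc)
  then have chebyshev: "real (card ?B) * (1 + 2 * L)^2 \<le> ?D ^ m"
    using \<sigma> by (rule mult_right_le_imp_le)
  have "exp L \<le> (1 + 2 * L)^2" using exp_le_square_poly L by simp
  then have "real (card ?B) * exp L \<le> real (card ?B) * (1 + 2 * L)^2"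
    by (rule mult_left_mono) simp
  with chebyshev have "real (card ?B) * exp L \<le> ?D ^ m" by linarith
  then show ?thesis by (simp add: exp_minus field_simps)
qed

text \<open>The tail for large L (L \<ge> 4): the cosh moment at scale \<kappa> = 2 sqrt(L/\<sigma>2), which is
  admissible because every step satisfies 4 L ||w a||^2 \<le> \<sigma>2.\<close>
lemma norm_sum_lists_tail_large:
  fixes w :: "'d::finite \<Rightarrow> 'v::real_inner"
  assumes centred: "(\<Sum>a\<in>UNIV. w a) = 0" and L: "4 \<le> L" and \<sigma>: "0 < \<sigma>2"
    and variance: "real m / real CARD('d) * (\<Sum>a\<in>UNIV. (norm (w a))^2) \<le> \<sigma>2"
    and small: "\<And>a. 4 * L * (norm (w a))^2 \<le> \<sigma>2"
  shows "real (card {xs. length xs = m \<and> (1 + 2 * L)^2 * \<sigma>2 < (norm (sum_list (map w xs)))^2})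
    \<le> exp (-L) * real CARD('d) ^ m" (is "real (card ?B) \<le> _")
proof -
  let ?D = "real CARD('d)" and ?S = "\<lambda>xs. sum_list (map w xs)"
  define \<kappa> where "\<kappa> = 2 * sqrt L / sqrt \<sigma>2"
  define t where "t = (1 + 2 * L) * sqrt \<sigma>2"
  let ?T = "{xs. length xs = m \<and> t < norm (?S xs)}"
  have \<kappa>: "0 < \<kappa>" unfolding \<kappa>_def using \<sigma> L by simp
  have \<kappa>_sq: "\<kappa>^2 * \<sigma>2 = 4 * L"
    unfolding \<kappa>_def using \<sigma> L by (simp add: power_divide power_mult_distrib)
  have "\<kappa> * norm (w a) \<le> 1" for a
  proof -
    have "(\<kappa> * norm (w a))^2 = 4 * L * (norm (w a))^2 / \<sigma>2"
      using \<kappa>_sq \<sigma> by (simp add: power_mult_distrib field_simps)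
    also have "\<dots> \<le> 1" using small[of a] \<sigma> by simp
    finally show ?thesis by (simp add: power_le_one_iff abs_square_le_1)
  qed
  moreover have "t \<ge> 0" unfolding t_def using \<sigma> L by simp
  ultimately have "real (card ?T) * (exp (\<kappa> * t) / 2)
      \<le> ?D ^ m * exp (11/8 * \<kappa>^2 * (real m / ?D * (\<Sum>a\<in>UNIV. (norm (w a))^2)))"
    using cosh_moment_tail[OF centred \<kappa>] by simp
  also have "\<dots> \<le> ?D ^ m * exp (11/2 * L)"
    using mult_left_mono[OF variance, of "11/8 * \<kappa>^2"] \<kappa>_sq by (simp add: mult.assoc)
  finally have count: "real (card ?T) * exp (\<kappa> * t) \<le> 2 * ?D ^ m * exp (11/2 * L)" by simp
  have "?B \<subseteq> ?T"
  proof
    fix xs assume "xs \<in> ?B"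
    then have "t^2 < (norm (?S xs))^2" unfolding t_def using \<sigma> by (simp add: power_mult_distrib)
    then have "t < norm (?S xs)" by (rule power2_less_imp_less) simp
    then show "xs \<in> ?T" using \<open>xs \<in> ?B\<close> by simp
  qed
  moreover have "finite ?T" by (rule finite_subset[OF _ finite_lists_UNIV[of m]]) blast
  ultimately have "card ?B \<le> card ?T" by (simp add: card_mono)
  then have "real (card ?B) * exp (\<kappa> * t) \<le> real (card ?T) * exp (\<kappa> * t)"
    by (intro mult_right_mono) simp_all
  with count have "real (card ?B) * exp (\<kappa> * t) \<le> 2 * ?D ^ m * exp (11/2 * L)" by linarith
  then have "real (card ?B) \<le> 2 * ?D ^ m * exp (11/2 * L) / exp (\<kappa> * t)"
    by (simp add: pos_le_divide_eq)
  also have "\<kappa> * t = 2 * sqrt L * (1 + 2 * L)" unfolding \<kappa>_def t_def using \<sigma> by simp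
  also have "2 * ?D ^ m * exp (11/2 * L) / exp (2 * sqrt L * (1 + 2 * L))
      = ?D ^ m * (2 * exp (11/2 * L - 2 * sqrt L * (1 + 2 * L)))"
    by (simp add: exp_diff)
  also have "\<dots> \<le> ?D ^ m * exp (-L)"
    using exp_tail_large_L[OF L] by (intro mult_left_mono) simp_all
  finally show ?thesis by (simp add: mult.commute)
qed

lemma norm_sum_lists_tail:
  fixes w :: "'d::finite \<Rightarrow> 'v::real_inner"
  assumes centred: "(\<Sum>a\<in>UNIV. w a) = 0" and L: "0 < L"
    and variance: "real m / real CARD('d) * (\<Sum>a\<in>UNIV. (norm (w a))^2) \<le> \<sigma>2"
    and small: "\<And>a. 4 * L * (norm (w a))^2 \<le> \<sigma>2"
  shows "real (card {xs. length xs = m \<and> (1 + 2 * L)^2 * \<sigma>2 < (norm (sum_list (map w xs)))^2})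
    \<le> exp (-L) * real CARD('d) ^ m"
proof -
  have "0 \<le> real m / real CARD('d) * (\<Sum>a\<in>UNIV. (norm (w a))^2)" by (simp add: sum_nonneg)
  then consider "\<sigma>2 = 0" | "0 < \<sigma>2" "L \<le> 4" | "0 < \<sigma>2" "4 \<le> L"
    using variance by linarith
  then show ?thesis
  proof cases
    case 1
    then have "w a = 0" for a using small[of a] L by (simp add: mult_le_0_iff)
    then have "sum_list (map w xs) = 0" for xs by (induction xs) simp_all
    then show ?thesis using 1 by simp
  next
    case 2
    show ?thesis by (rule norm_sum_lists_tail_moderate[OF centred L 2(2,1) variance])
  next
    case 3
    show ?thesis by (rule norm_sum_lists_tail_large[OF centred 3(2,1) variance small])
  qed
qed

subsection \<open>Rows of U and the coherences\<close>

lemma sampled_prod_sum_list: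
  "sampled_prod U v \<Omega> = sum_list (map (\<lambda>a. v $ a *\<^sub>R U $ a) \<Omega>)"
  unfolding sampled_prod_def by (simp add: sum_list_sum_nth atLeast0LessThan)

text \<open>Summed over all of [d], the weighted rows give U^T v; so v \<perp> U centres them.\<close>
lemma sum_weighted_rows:
  fixes U :: "real^'r^'d" and v :: "real^'d"
  shows "(\<Sum>a\<in>UNIV. v $ a *\<^sub>R U $ a) = transpose U *v v"
  by (simp add: vec_eq_iff matrix_vector_mult_def transpose_def sum_component mult.commute)

lemma norm_orthonormal_cols_mult:
  fixes U :: "real^'r^'d"
  assumes "orthonormal_cols U"
  shows "norm (U *v y) = norm y"
proof -
  have "(U *v y) \<bullet> (U *v y) = ((U *v y) v* U) \<bullet> y" by (rule dot_lmul_matrix[symmetric])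
  also have "(U *v y) v* U = (transpose U ** U) *v y"
    by (metis transpose_matrix_vector matrix_vector_mul_assoc)
  also have "\<dots> = y" using assms by (simp add: orthonormal_cols_def)
  finally show ?thesis by (simp add: norm_eq_sqrt_inner)
qed

lemma norm_proj_axis:
  fixes U :: "real^'r^'d"
  assumes "orthonormal_cols U"
  shows "norm (proj_sub U (axis a 1)) = norm (U $ a)"
proof -
  have "transpose U *v axis a 1 = U $ a"
    by (simp add: vec_eq_iff matrix_vector_mult_def transpose_def axis_def if_distrib cong: if_cong)
  then have "proj_sub U (axis a 1) = U *v (U $ a)"
    unfolding proj_sub_def by (metis matrix_vector_mul_assoc)
  then show ?thesis using norm_orthonormal_cols_mult[OF assms] by simp
qed

lemma row_norm_le_coherence:
  fixes U :: "real^'r^'d"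
  assumes "orthonormal_cols U"
  shows "(norm (U $ a))^2 \<le> real CARD('r) * coh_sub U / real CARD('d)"
proof -
  have "(norm (U $ a))^2 = (norm (proj_sub U (axis a 1)))^2" by (simp add: norm_proj_axis[OF assms])
  also have "\<dots> \<le> Max (range (\<lambda>i::'d. (norm (proj_sub U (axis i 1)))\<^sup>2))"
    by (rule Max_ge) simp_all
  also have "\<dots> = real CARD('r) * coh_sub U / real CARD('d)"
    unfolding coh_sub_def by simp
  finally show ?thesis .
qed

lemma weighted_rows_bounds:
  fixes U :: "real^'r^'d" and v :: "real^'d"
  assumes rows: "\<And>a. (norm (U $ a))^2 \<le> \<mu>"
  shows "(norm (v $ a *\<^sub>R U $ a))^2 \<le> (infnorm v)^2 * \<mu>"
    and "(\<Sum>a\<in>UNIV. (norm (v $ a *\<^sub>R U $ a))^2) \<le> \<mu> * (norm v)^2"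
proof -
  have norm_w: "(norm (v $ a *\<^sub>R U $ a))^2 = (v $ a)^2 * (norm (U $ a))^2" for a
    by (simp add: power_mult_distrib)
  have "(v $ a)^2 \<le> (infnorm v)^2"
    by (metis abs_ge_zero component_le_infnorm_cart power2_abs power_mono)
  then show "(norm (v $ a *\<^sub>R U $ a))^2 \<le> (infnorm v)^2 * \<mu>"
    unfolding norm_w by (intro mult_mono rows) auto
  have "(\<Sum>a\<in>UNIV. (norm (v $ a *\<^sub>R U $ a))^2) \<le> (\<Sum>a\<in>UNIV. (v $ a)^2 * \<mu>)"
    unfolding norm_w by (intro sum_mono mult_left_mono rows) simp
  also have "\<dots> = \<mu> * (\<Sum>a\<in>UNIV. (v $ a)^2)" by (simp add: sum_distrib_left mult.commute)
  also have "(\<Sum>a\<in>UNIV. (v $ a)^2) = (norm v)^2"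
    unfolding power2_norm_eq_inner inner_vec_def by (simp add: power2_eq_square)
  finally show "(\<Sum>a\<in>UNIV. (norm (v $ a *\<^sub>R U $ a))^2) \<le> \<mu> * (norm v)^2" .
qed

text \<open>For v \<perp> U the weighted rows meet the hypotheses of the tail bound with
  \<sigma>2 = (m/d) (r \<mu>(U)/d) ||v||^2: it bounds the second moment, and the sample-size condition
  m \<ge> 4 \<mu>(v) L makes every single step small against it.\<close>
lemma weighted_rows_tail_hypotheses:
  fixes U :: "real^'r^'d" and v :: "real^'d"
  assumes U: "orthonormal_cols U" and v: "v \<noteq> 0"
    and L: "0 \<le> L" and m: "real m \<ge> 4 * coh_vec v * L"
  defines "\<sigma>2 \<equiv> real m / real CARD('d) * (real CARD('r) * coh_sub U / real CARD('d)) * (norm v)^2"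
  shows "real m / real CARD('d) * (\<Sum>a\<in>UNIV. (norm (v $ a *\<^sub>R U $ a))^2) \<le> \<sigma>2"
    and "4 * L * (norm (v $ a *\<^sub>R U $ a))^2 \<le> \<sigma>2"
proof -
  define \<mu> where "\<mu> = real CARD('r) * coh_sub U / real CARD('d)"
  have rows: "(norm (U $ b))^2 \<le> \<mu>" for b
    unfolding \<mu>_def by (rule row_norm_le_coherence[OF U])
  have "real m / real CARD('d) * (\<Sum>a\<in>UNIV. (norm (v $ a *\<^sub>R U $ a))^2)
      \<le> real m / real CARD('d) * (\<mu> * (norm v)^2)"
    by (intro mult_left_mono weighted_rows_bounds(2)[OF rows]) simp
  then show "real m / real CARD('d) * (\<Sum>a\<in>UNIV. (norm (v $ a *\<^sub>R U $ a))^2) \<le> \<sigma>2"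
    by (simp only: \<sigma>2_def \<mu>_def mult.assoc)
  have "4 * L * (infnorm v)^2 \<le> real m / real CARD('d) * (norm v)^2"
    using m v unfolding coh_vec_def by (simp add: field_simps)
  then have "4 * L * (infnorm v)^2 * \<mu> \<le> real m / real CARD('d) * (norm v)^2 * \<mu>"
    by (rule mult_right_mono) (rule order.trans[OF zero_le_power2 rows])
  moreover have "4 * L * (norm (v $ a *\<^sub>R U $ a))^2 \<le> 4 * L * ((infnorm v)^2 * \<mu>)"
    using weighted_rows_bounds(1)[OF rows] L by (simp add: mult_left_mono)
  ultimately show "4 * L * (norm (v $ a *\<^sub>R U $ a))^2 \<le> \<sigma>2"
    unfolding \<sigma>2_def \<mu>_def by (simp add: algebra_simps)
qed

subsection \<open>From counting to probability\<close>

lemma prob_sample_lists_ge: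
  fixes P :: "'d::finite list \<Rightarrow> bool"
  assumes bad: "real (card {xs. length xs = m \<and> \<not> P xs}) \<le> \<delta> * real CARD('d) ^ m"
  shows "measure_pmf.prob (sample_lists m) {xs. P xs} \<ge> 1 - \<delta>"
proof -
  let ?A = "{xs::'d list. length xs = m}"
  have "replicate m undefined \<in> ?A" by simp
  then have "?A \<noteq> {}" by blast
  then have prob: "measure_pmf.prob (sample_lists m) {xs. P xs} = card (?A \<inter> {xs. P xs}) / card ?A"
    unfolding sample_lists_def by (rule measure_pmf_of_set[OF _ finite_lists_UNIV])
  let ?G = "?A \<inter> {xs. P xs}" and ?B = "{xs. length xs = m \<and> \<not> P xs}"
  have fin: "finite ?G" "finite ?B"
    by (rule finite_subset[OF _ finite_lists_UNIV[of m]], blast)+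
  have "?A = ?G \<union> ?B" "?G \<inter> ?B = {}" by auto
  then have "card ?A = card ?G + card ?B" using card_Un_disjoint[OF fin] by simp
  then have "real (card ?G) = real (card ?A) - real (card ?B)" by simp
  then have "measure_pmf.prob (sample_lists m) {xs. P xs} = 1 - real (card ?B) / real CARD('d) ^ m"
    unfolding prob by (simp add: diff_divide_distrib card_lists_UNIV)
  moreover have "real (card ?B) / real CARD('d) ^ m \<le> \<delta>"
    using bad by (simp add: divide_le_eq)
  ultimately show ?thesis by linarith
qed

theorem lemma4:
  fixes U :: "real^'r^'d" and v :: "real^'d" and \<delta> :: real and m :: nat
  assumes "orthonormal_cols U"
    and "transpose U *v v = 0"
    and "v \<noteq> 0"
    and "0 < \<delta>" and "\<delta> < 1"
    and "real m \<ge> 4 * coh_vec v * ln (1 / \<delta>)"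
  shows "measure_pmf.prob (sample_lists m)
           {\<Omega>. (norm (sampled_prod U v \<Omega>))\<^sup>2 \<le>
                (1 + 2 * ln (1 / \<delta>))\<^sup>2 * (real m / real CARD('d)) *
                (real CARD('r) * coh_sub U / real CARD('d)) * (norm v)\<^sup>2}
         \<ge> 1 - \<delta>"
proof -
  define w where "w = (\<lambda>a. v $ a *\<^sub>R U $ a)"
  define L where "L = ln (1 / \<delta>)"
  define \<sigma>2 where
    "\<sigma>2 = real m / real CARD('d) * (real CARD('r) * coh_sub U / real CARD('d)) * (norm v)^2"
  have L: "0 < L" and \<delta>: "\<delta> = exp (-L)" unfolding L_def using assms(4,5) by (simp_all add: ln_div)
  have centred: "(\<Sum>a\<in>UNIV. w a) = 0"
    unfolding w_def sum_weighted_rows using assms(2) .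
  have "real m \<ge> 4 * coh_vec v * L" using assms(6) unfolding L_def .
  note hyps = weighted_rows_tail_hypotheses[OF assms(1,3) less_imp_le[OF L] this, folded \<sigma>2_def]
  have "real (card {xs. length xs = m \<and> \<not> (norm (sampled_prod U v xs))^2 \<le> (1 + 2 * L)^2 * \<sigma>2})
      \<le> \<delta> * real CARD('d) ^ m"
    using norm_sum_lists_tail[OF centred L, of m \<sigma>2] hyps
    by (simp add: \<delta> sampled_prod_sum_list w_def not_le)
  moreover have "(1 + 2 * L)^2 * \<sigma>2 = (1 + 2 * ln (1 / \<delta>))\<^sup>2 * (real m / real CARD('d)) *
      (real CARD('r) * coh_sub U / real CARD('d)) * (norm v)\<^sup>2"
    by (simp add: \<sigma>2_def L_def mult.assoc)
  ultimately show ?thesis by (simp add: prob_sample_lists_ge)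
qed

end
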